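(* Let $\rho\in(0,1)$, $\lambda=\frac{1-\rho}{1+\rho}$, and let $x_i(k)$, $i\in\mathbb Z$, $k\ge0$, be real numbers with $|x_i(k)|<M$ for some $M<\infty$. Define $y_i(k)$ for all $i\in\mathbb Z$, $k\ge0$ by $y_i(0)=\lambda x_i(0)$; $y_i(1)=y_i(0)+\rho(y_{i-1}(0)+y_{i+1}(0))+\lambda(x_i(1)-x_i(0))$; $y_i(2)=y_i(1)+\rho(y_{i-1}(1)-y_{i-1}(0))+\rho(y_{i+1}(1)-y_{i+1}(0))-2\rho^2y_i(0)+\lambda(x_i(2)-x_i(1))$; and for $k\ge2$, $y_i(k+1)=y_i(k)+\rho(y_{i-1}(k)-y_{i-1}(k-1))+\rho(y_{i+1}(k)-y_{i+1}(k-1))-\rho^2(y_i(k-1)-y_i(k-2))+\lambda(x_i(k+1)-x_i(k))-\rho^2\lambda(x_i(k-1)-x_i(k-2))$. Then for all $i\in\mathbb Z$ and all $k\ge0$, $$y_i(k)=\frac{1-\rho}{1+\rho}\Big(x_i(k)+\sum_{j=1}^k\rho^j\big(x_{i-j}(k-j)+x_{i+j}(k-j)\big)\Big).$$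
   Context: Sensors indexed by $i\in\mathbb Z$ on a line; at each time $k=0,1,2,\dots$ sensor $i$ takes a (time-varying) measurement $x_i(k)$ and maintains a consensus variable $y_i(k)$; sensor $i$ may use only its own measurements and the consensus variables of sensors $i\pm1$. *)

theory Defs
  imports Complex_Main
begin

end

theory Submission
  imports Defs
begin

text \<open>Split the weighted sum into a left-moving wave \<open>L\<^sub>i(k) = \<Sum>\<^sub>j\<^sub>\<le>\<^sub>k \<rho>\<^sup>j x\<^sub>i\<^sub>-\<^sub>j(k-j)\<close>
and a right-moving wave \<open>R\<close>, which obey \<open>L\<^sub>i(k+1) = x\<^sub>i(k+1) + \<rho> L\<^sub>i\<^sub>-\<^sub>1(k)\<close> and its mirror image.
The candidate \<open>F = L + R - x\<close> then satisfies
\<open>\<rho> (F\<^sub>i\<^sub>-\<^sub>1(k+1) + F\<^sub>i\<^sub>+\<^sub>1(k+1)) = F\<^sub>i(k+2) - x\<^sub>i(k+2) + \<rho>\<^sup>2 (F\<^sub>i(k) + x\<^sub>i(k))\<close>: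
the wave reaching \<open>i\<close> through a neighbour is the wave at \<open>i\<close> two steps later, while the wave
that passed \<open>i\<close> and comes back from the other neighbour is \<open>\<rho>\<^sup>2\<close> times the wave at \<open>i\<close> two steps
earlier. This makes every constant multiple of \<open>F\<close> a solution of the recursion, and the
recursion determines \<open>y\<close> uniquely.\<close>

fun left_wave :: "real \<Rightarrow> (int \<Rightarrow> nat \<Rightarrow> real) \<Rightarrow> int \<Rightarrow> nat \<Rightarrow> real" where
  "left_wave r x i 0 = x i 0"
| "left_wave r x i (Suc k) = x i (Suc k) + r * left_wave r x (i - 1) k"

fun right_wave :: "real \<Rightarrow> (int \<Rightarrow> nat \<Rightarrow> real) \<Rightarrow> int \<Rightarrow> nat \<Rightarrow> real" where
  "right_wave r x i 0 = x i 0"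
| "right_wave r x i (Suc k) = x i (Suc k) + r * right_wave r x (i + 1) k"

definition wave :: "real \<Rightarrow> (int \<Rightarrow> nat \<Rightarrow> real) \<Rightarrow> int \<Rightarrow> nat \<Rightarrow> real" where
  "wave r x i k = x i k + (\<Sum>j = 1..k. r^j * (x (i - int j) (k - j) + x (i + int j) (k - j)))"

lemma left_wave_eq_sum: "left_wave r x i k = (\<Sum>j\<le>k. r^j * x (i - int j) (k - j))"
proof (induction k arbitrary: i)
  case (Suc k)
  have "(\<Sum>j\<le>Suc k. r^j * x (i - int j) (Suc k - j))
      = x i (Suc k) + r * (\<Sum>j\<le>k. r^j * x (i - 1 - int j) (k - j))"
    by (subst sum.atMost_Suc_shift) (simp add: sum_distrib_left algebra_simps)
  then show ?case using Suc by simp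
qed simp

lemma right_wave_eq_sum: "right_wave r x i k = (\<Sum>j\<le>k. r^j * x (i + int j) (k - j))"
proof (induction k arbitrary: i)
  case (Suc k)
  have "(\<Sum>j\<le>Suc k. r^j * x (i + int j) (Suc k - j))
      = x i (Suc k) + r * (\<Sum>j\<le>k. r^j * x (i + 1 + int j) (k - j))"
    by (subst sum.atMost_Suc_shift) (simp add: sum_distrib_left algebra_simps)
  then show ?case using Suc by simp
qed simp

lemma wave_eq_left_right: "wave r x i k = left_wave r x i k + right_wave r x i k - x i k"
proof -
  have "{..k} = insert 0 {1..k}" by auto
  then show ?thesis
    by (simp add: wave_def left_wave_eq_sum right_wave_eq_sum distrib_left sum.distrib)
qed

lemma wave_0: "wave r x i 0 = x i 0"
  by (simp add: wave_def)

lemma wave_1: "wave r x i 1 = x i 1 + r * (x (i - 1) 0 + x (i + 1) 0)"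
  by (simp add: wave_eq_left_right algebra_simps)

lemma wave_neighbours:
  "r * (wave r x (i - 1) (Suc k) + wave r x (i + 1) (Suc k))
     = wave r x i (Suc (Suc k)) - x i (Suc (Suc k)) + r^2 * (wave r x i k + x i k)"
  by (simp add: wave_eq_left_right algebra_simps power2_eq_square)

lemma wave_rec_2:
  "c * wave r x i 2 = c * wave r x i 1
     + r * (c * wave r x (i - 1) 1 - c * wave r x (i - 1) 0)
     + r * (c * wave r x (i + 1) 1 - c * wave r x (i + 1) 0)
     - 2 * r^2 * (c * wave r x i 0) + c * (x i 2 - x i 1)"
proof -
  have "r * (wave r x (i - 1) 1 + wave r x (i + 1) 1)
      = wave r x i 2 - x i 2 + r^2 * (wave r x i 0 + x i 0)"
    using wave_neighbours[of r x i 0] by (simp add: numeral_2_eq_2)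
  from arg_cong[where f = "(*) c", OF this] show ?thesis
    using wave_1[of r x i] by (simp add: wave_0 algebra_simps power2_eq_square)
qed

lemma wave_rec:
  assumes "k \<ge> 2"
  shows "c * wave r x i (k + 1) = c * wave r x i k
     + r * (c * wave r x (i - 1) k - c * wave r x (i - 1) (k - 1))
     + r * (c * wave r x (i + 1) k - c * wave r x (i + 1) (k - 1))
     - r^2 * (c * wave r x i (k - 1) - c * wave r x i (k - 2))
     + c * (x i (k + 1) - x i k) - r^2 * c * (x i (k - 1) - x i (k - 2))"
proof -
  obtain m where k: "k = Suc (Suc m)" using assms by (metis add_2_eq_Suc le_Suc_ex)
  show ?thesis
    using arg_cong[where f = "(*) c", OF wave_neighbours[of r x i "Suc m"]]
      arg_cong[where f = "(*) c", OF wave_neighbours[of r x i m]]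
    unfolding k by (simp add: algebra_simps)
qed

lemma consensus_eq_wave:
  fixes r c :: real and x y :: "int \<Rightarrow> nat \<Rightarrow> real"
  assumes y0: "\<And>i. y i 0 = c * x i 0"
    and y1: "\<And>i. y i 1 = y i 0 + r * (y (i - 1) 0 + y (i + 1) 0) + c * (x i 1 - x i 0)"
    and y2: "\<And>i. y i 2 = y i 1 + r * (y (i - 1) 1 - y (i - 1) 0) + r * (y (i + 1) 1 - y (i + 1) 0)
                 - 2 * r^2 * y i 0 + c * (x i 2 - x i 1)"
    and yrec: "\<And>i k. k \<ge> 2 \<Longrightarrow>
      y i (k + 1) = y i k + r * (y (i - 1) k - y (i - 1) (k - 1)) + r * (y (i + 1) k - y (i + 1) (k - 1))
        - r^2 * (y i (k - 1) - y i (k - 2)) + c * (x i (k + 1) - x i k)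
        - r^2 * c * (x i (k - 1) - x i (k - 2))"
  shows "y i k = c * wave r x i k"
proof (induction k arbitrary: i rule: less_induct)
  case (less k)
  consider "k = 0" | "k = 1" | "k = 2" | "k \<ge> 3" by linarith
  then show ?case
  proof cases
    case 1
    then show ?thesis by (simp add: y0 wave_0)
  next
    case 2
    then show ?thesis using y1[of i] y0 wave_0 wave_1[of r x i] by (simp add: algebra_simps)
  next
    case 3
    then show ?thesis using y2 wave_rec_2 less[of 1] less[of 0] by simp
  next
    case 4
    define n where "n = k - 1"
    then have k: "k = n + 1" and n: "n \<ge> 2" using 4 by auto
    have "y j n = c * wave r x j n" "y j (n - 1) = c * wave r x j (n - 1)"
         "y j (n - 2) = c * wave r x j (n - 2)" for j
      using less n k by auto
    then show ?thesis using yrec[OF n] wave_rec[OF n] k by simp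
  qed
qed

theorem theorem4:
  fixes rho lam M :: real and x y :: "int \<Rightarrow> nat \<Rightarrow> real"
  assumes rho_pos: "0 < rho" "rho < 1"
    and lam_def: "lam = (1 - rho) / (1 + rho)"
    and bnd: "\<And>i k. \<bar>x i k\<bar> < M"
    and y0: "\<And>i. y i 0 = lam * x i 0"
    and y1: "\<And>i. y i 1 = y i 0 + rho * (y (i - 1) 0 + y (i + 1) 0) + lam * (x i 1 - x i 0)"
    and y2: "\<And>i. y i 2 = y i 1 + rho * (y (i - 1) 1 - y (i - 1) 0) + rho * (y (i + 1) 1 - y (i + 1) 0)
                 - 2 * rho^2 * y i 0 + lam * (x i 2 - x i 1)"
    and yrec: "\<And>i k. k \<ge> 2 \<Longrightarrow>
      y i (k + 1) = y i k + rho * (y (i - 1) k - y (i - 1) (k - 1)) + rho * (y (i + 1) k - y (i + 1) (k - 1))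
        - rho^2 * (y i (k - 1) - y i (k - 2)) + lam * (x i (k + 1) - x i k)
        - rho^2 * lam * (x i (k - 1) - x i (k - 2))"
  shows "\<forall>i k. y i k = (1 - rho) / (1 + rho) *
      (x i k + (\<Sum>j = 1..k. rho^j * (x (i - int j) (k - j) + x (i + int j) (k - j))))"
  using consensus_eq_wave[of y lam x rho, OF y0 y1 y2 yrec]
  by (simp add: lam_def wave_def)

end
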